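(* Let $n \geq 1$ be an integer, let $\lambda_0 \geq 0 > \lambda_1 \geq \cdots \geq \lambda_n$ be real numbers and let $z = a + bi$ with $a \in \mathbb{R}$ and $b > 0$. If $\lambda_0 + \sum_{j=1}^n \lambda_j - 2|z| \geq 0$, then there is an $(n+3) \times (n+3)$ normal centrosymmetric nonnegative matrix with eigenvalues $\lambda_0, \lambda_1, \ldots, \lambda_n, z, \overline{z}$.
   Context: $J$ denotes the reverse identity matrix of the appropriate size (ones on the anti-diagonal, zeros elsewhere). A square matrix $Q$ is centrosymmetric if $JQJ = Q$, nonnegative if all entries are nonnegative, and normal if $QQ^* = Q^*Q$. *)

theory Defs
  imports "Jordan_Normal_Form.Schur_Decomposition" "Jordan_Normal_Form.Char_Poly"
begin

definition rev_id_mat :: "nat \<Rightarrow> 'a :: {zero,one} mat" where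
  "rev_id_mat k = mat k k (\<lambda>(i,j). if i + j + 1 = k then 1 else 0)"

definition centrosymmetric :: "'a :: comm_ring_1 mat \<Rightarrow> bool" where
  "centrosymmetric Q \<longleftrightarrow> square_mat Q \<and>
     rev_id_mat (dim_row Q) * Q * rev_id_mat (dim_row Q) = Q"

definition nonneg_mat :: "real mat \<Rightarrow> bool" where
  "nonneg_mat Q \<longleftrightarrow> (\<forall>i < dim_row Q. \<forall>j < dim_col Q. Q $$ (i,j) \<ge> 0)"

definition normal_mat :: "real mat \<Rightarrow> bool" where
  "normal_mat Q \<longleftrightarrow> (let C = map_mat complex_of_real Q in
     C * mat_adjoint C = mat_adjoint C * C)"

definition has_eigenvalues :: "real mat \<Rightarrow> complex list \<Rightarrow> bool" where
  "has_eigenvalues Q es \<longleftrightarrow>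
     char_poly (map_mat complex_of_real Q) = (\<Prod>e\<leftarrow>es. [:-e, 1:])"

end

theory Submission
  imports Defs
begin

(* Let D be the block diagonal matrix diag(d_1, ..., d_m) followed by the rotation block
   [[a, b], [-b, a]]. If P is orthogonal then P D P^T is normal with eigenvalues
   d_1, ..., d_m, a + bi, a - bi, so it suffices to make P D P^T nonnegative and
   centrosymmetric. We also keep the first column u of P nonnegative and centrosymmetric;
   it is then a Perron vector for d_1.

   For sizes 4 and 5 the matrices are written down. The induction step replaces
   d_1 = alpha >= 0 by alpha - l - l', l, l' for negative l, l': border Q by a new first and
   last row and column, with -l in the two off-diagonal corners, 0 in the diagonal corners
   and a multiple of u on the edges. The bordered matrix is again nonnegative and
   centrosymmetric; it has the eigenvector e_0 - e_(k+1) for l, acts on the span of u and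
   e_0 + e_(k+1) as a symmetric 2x2 matrix with eigenvalues alpha - l - l' and l', and agrees
   with Q on the orthogonal complement of u. The negative eigenvalues are added two at a
   time, and the trace condition keeps every intermediate alpha nonnegative. *)

lemma index_mult_mat_sum:
  assumes "A \<in> carrier_mat n m" and "B \<in> carrier_mat m p" and "i < n" and "j < p"
  shows "(A * B) $$ (i,j) = (\<Sum>l<m. A $$ (i,l) * B $$ (l,j))"
  using assms by (simp add: scalar_prod_def atLeast0LessThan)

lemma orthonormal_cols:
  assumes "P \<in> carrier_mat k k" and "P\<^sup>T * P = 1\<^sub>m k" and "i < k" and "j < k"
  shows "(\<Sum>m<k. P $$ (m,i) * P $$ (m,j)) = (if i = j then 1 else 0)"
proof -
  have "(P\<^sup>T * P) $$ (i,j) = (\<Sum>m<k. P\<^sup>T $$ (i,m) * P $$ (m,j))"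
    by (rule index_mult_mat_sum) (use assms in auto)
  also have "\<dots> = (\<Sum>m<k. P $$ (m,i) * P $$ (m,j))"
    by (rule sum.cong) (use assms in auto)
  finally show ?thesis using assms by simp
qed

lemma sum_lessThan_split_ends:
  "(\<Sum>l<k+2. f l) = f 0 + f (Suc k) + (\<Sum>l<k. f (Suc l))"
proof -
  have "(\<Sum>l<k+2. f l) = (\<Sum>l<Suc k. f l) + f (Suc k)" by simp
  also have "(\<Sum>l<Suc k. f l) = f 0 + (\<Sum>l<k. f (Suc l))" by (rule sum.lessThan_Suc_shift)
  finally show ?thesis by (simp add: add_ac)
qed

lemma det_2x2:
  assumes "A \<in> carrier_mat 2 2"
  shows "det A = A $$ (0,0) * A $$ (1,1) - A $$ (0,1) * A $$ (1,0)"
proof -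
  have det1: "det (mat (Suc 0) (Suc 0) f) = f (0,0)" for f :: "nat \<times> nat \<Rightarrow> 'a"
    by (subst det_upper_triangular[of _ 1]) (auto simp: upper_triangular_def diag_mat_def)
  have "det A = (\<Sum>j<2. A $$ (0,j) * cofactor A 0 j)"
    by (rule laplace_expansion_row[OF assms]) auto
  then show ?thesis
    using assms by (simp add: cofactor_def numeral_2_eq_2 det1 mat_delete_def)
qed

lemma orthogonal_conj_normal:
  fixes P D :: "'a :: comm_ring_1 mat"
  assumes P: "P \<in> carrier_mat k k" and D: "D \<in> carrier_mat k k" and PP: "P\<^sup>T * P = 1\<^sub>m k"
    and DD: "D * D\<^sup>T = D\<^sup>T * D"
  shows "(P * D * P\<^sup>T) * (P * D * P\<^sup>T)\<^sup>T = (P * D * P\<^sup>T)\<^sup>T * (P * D * P\<^sup>T)"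
proof -
  have PT: "P\<^sup>T \<in> carrier_mat k k" and DT: "D\<^sup>T \<in> carrier_mat k k" using P D by auto
  have T: "(P * D * P\<^sup>T)\<^sup>T = P * D\<^sup>T * P\<^sup>T"
    using P D by (simp add: transpose_mult[of _ k k _ k] assoc_mult_mat[of _ k k _ k _ k])
  have "(P * D * P\<^sup>T) * (P * D\<^sup>T * P\<^sup>T) = P * (D * (P\<^sup>T * P) * D\<^sup>T) * P\<^sup>T"
    using P D PT DT by (simp add: assoc_mult_mat[of _ k k _ k _ k])
  also have "\<dots> = P * (D\<^sup>T * (P\<^sup>T * P) * D) * P\<^sup>T"
    using PP D DT DD by simp
  also have "\<dots> = (P * D\<^sup>T * P\<^sup>T) * (P * D * P\<^sup>T)"
    using P D PT DT by (simp add: assoc_mult_mat[of _ k k _ k _ k])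
  finally show ?thesis unfolding T .
qed

lemma intertwining_orthogonal_conj:
  fixes P D Q :: "'a :: field mat"
  assumes P: "P \<in> carrier_mat k k" and Q: "Q \<in> carrier_mat k k"
    and PP: "P\<^sup>T * P = 1\<^sub>m k" and QP: "Q * P = P * D"
  shows "Q = P * D * P\<^sup>T"
proof -
  have PT: "P\<^sup>T \<in> carrier_mat k k" using P by simp
  have "Q = Q * (P * P\<^sup>T)"
    using mat_mult_left_right_inverse[OF PT P PP] Q by simp
  also have "\<dots> = P * D * P\<^sup>T"
    using Q P PT QP by (simp add: assoc_mult_mat[of _ k k _ k _ k, symmetric])
  finally show ?thesis .
qed

lemma normal_matI:
  assumes Q: "Q \<in> carrier_mat k k" and "Q * Q\<^sup>T = Q\<^sup>T * Q"
  shows "normal_mat Q"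
proof -
  have "mat_adjoint (map_mat complex_of_real Q) = map_mat complex_of_real Q\<^sup>T"
    by (rule eq_matI) (use Q in \<open>auto simp: mat_adjoint_def mat_of_rows_def\<close>)
  then show ?thesis
    unfolding normal_mat_def Let_def
    using assms by (simp add: of_real_hom.mat_hom_mult[symmetric, of _ k k _ k])
qed

lemma rev_id_mat_mult:
  fixes A :: "real mat"
  assumes A: "A \<in> carrier_mat k k"
  shows "rev_id_mat k * A = mat k k (\<lambda>(i,j). A $$ (k-1-i, j))"
proof (rule eq_matI)
  fix i j
  assume "i < dim_row (mat k k (\<lambda>(i,j). A $$ (k-1-i, j)))"
    and "j < dim_col (mat k k (\<lambda>(i,j). A $$ (k-1-i, j)))"
  then have i: "i < k" and j: "j < k" by auto
  have "(rev_id_mat k * A) $$ (i,j) = (\<Sum>m<k. (if i + m + 1 = k then 1 else 0) * A $$ (m,j))"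
    by (subst index_mult_mat_sum[of _ k k _ k]) (use i j A in \<open>auto simp: rev_id_mat_def\<close>)
  also have "\<dots> = (\<Sum>m<k. if m = k-1-i then A $$ (m,j) else 0)"
    by (rule sum.cong) (use i in auto)
  finally show "(rev_id_mat k * A) $$ (i,j) = mat k k (\<lambda>(i,j). A $$ (k-1-i, j)) $$ (i,j)"
    using i j by simp
qed (use A in \<open>auto simp: rev_id_mat_def\<close>)

lemma rev_id_mat_conj:
  fixes Q :: "real mat"
  assumes Q: "Q \<in> carrier_mat k k"
  shows "rev_id_mat k * Q * rev_id_mat k = mat k k (\<lambda>(i,j). Q $$ (k-1-i, k-1-j))"
proof -
  have J: "rev_id_mat k \<in> carrier_mat k k" and JT: "(rev_id_mat k)\<^sup>T = (rev_id_mat k :: real mat)"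
    by (auto simp: rev_id_mat_def)
  have "rev_id_mat k * Q * rev_id_mat k = (rev_id_mat k * (rev_id_mat k * Q)\<^sup>T)\<^sup>T"
    by (subst transpose_mult[of "rev_id_mat k" k k "(rev_id_mat k * Q)\<^sup>T" k])
      (use Q J mult_carrier_mat in \<open>auto simp: JT\<close>)
  also have "\<dots> = mat k k (\<lambda>(i,j). Q $$ (k-1-i, k-1-j))"
    using Q by (subst rev_id_mat_mult, simp)+ auto
  finally show ?thesis .
qed

lemma centrosymmetric_iff:
  fixes Q :: "real mat"
  assumes Q: "Q \<in> carrier_mat k k"
  shows "centrosymmetric Q \<longleftrightarrow> (\<forall>i<k. \<forall>j<k. Q $$ (k-1-i, k-1-j) = Q $$ (i,j))"
proof
  assume "centrosymmetric Q"
  then have M: "mat k k (\<lambda>(i,j). Q $$ (k-1-i, k-1-j)) = Q"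
    using rev_id_mat_conj[OF Q] Q by (simp add: centrosymmetric_def)
  show "\<forall>i<k. \<forall>j<k. Q $$ (k-1-i, k-1-j) = Q $$ (i,j)"
  proof (intro allI impI)
    fix i j assume "i < k" "j < k"
    then show "Q $$ (k-1-i, k-1-j) = Q $$ (i,j)"
      using arg_cong[OF M, of "\<lambda>A. A $$ (i,j)"] by simp
  qed
next
  assume "\<forall>i<k. \<forall>j<k. Q $$ (k-1-i, k-1-j) = Q $$ (i,j)"
  then show "centrosymmetric Q"
    using rev_id_mat_conj[OF Q] Q by (auto simp: centrosymmetric_def)
qed

section \<open>The real normal form\<close>

definition rot_mat :: "real \<Rightarrow> real \<Rightarrow> real mat" where
  "rot_mat a b = mat 2 2 (\<lambda>(i,j). if i = j then a else if i = 0 then b else - b)"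

fun diag_rot_mat :: "real \<Rightarrow> real \<Rightarrow> real list \<Rightarrow> real mat" where
  "diag_rot_mat a b [] = rot_mat a b"
| "diag_rot_mat a b (d # ds) = four_block_mat (mat 1 1 (\<lambda>_. d)) (0\<^sub>m 1 (length ds + 2))
      (0\<^sub>m (length ds + 2) 1) (diag_rot_mat a b ds)"

declare diag_rot_mat.simps(2) [simp del]

lemma diag_rot_mat_carrier: "diag_rot_mat a b ds \<in> carrier_mat (length ds + 2) (length ds + 2)"
  by (induction ds) (auto simp: rot_mat_def diag_rot_mat.simps)

lemma diag_rot_mat_Cons_index:
  assumes "i < length ds + 3" and "j < length ds + 3"
  shows "diag_rot_mat a b (d # ds) $$ (i,j) =
    (if i = 0 \<or> j = 0 then (if i = j then d else 0) else diag_rot_mat a b ds $$ (i - 1, j - 1))"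
  using assms diag_rot_mat_carrier[of a b ds] by (auto simp: diag_rot_mat.simps)

lemma sum_mult_diag_rot_mat_Cons:
  assumes "n = length ds + 3" and "j < n"
  shows "(\<Sum>l<n. f l * diag_rot_mat a b (d # ds) $$ (l,j)) =
    (if j = 0 then f 0 * d else (\<Sum>l<n - 1. f (Suc l) * diag_rot_mat a b ds $$ (l, j - 1)))"
proof -
  obtain m where n: "n = Suc m" using assms by (cases n) auto
  have "(\<Sum>l<n. f l * diag_rot_mat a b (d # ds) $$ (l,j)) =
      f 0 * diag_rot_mat a b (d # ds) $$ (0,j) +
      (\<Sum>l<n - 1. f (Suc l) * diag_rot_mat a b (d # ds) $$ (Suc l,j))"
    unfolding n diff_Suc_1 by (rule sum.lessThan_Suc_shift)
  then show ?thesis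
    using assms by (simp add: diag_rot_mat_Cons_index)
qed

lemma index_mult_diag_rot_mat_Cons:
  fixes P :: "real mat"
  assumes P: "P \<in> carrier_mat k k" and k: "k = length ds + 3" and m: "m < k" and j: "j < k"
  shows "(P * diag_rot_mat a b (d # ds)) $$ (m, j) =
    (if j = 0 then P $$ (m, 0) * d
     else (\<Sum>l<length ds + 2. P $$ (m, Suc l) * diag_rot_mat a b ds $$ (l, j - 1)))"
proof -
  have "(P * diag_rot_mat a b (d # ds)) $$ (m, j) =
      (\<Sum>l<k. P $$ (m,l) * diag_rot_mat a b (d # ds) $$ (l, j))"
    by (rule index_mult_mat_sum[OF P _ m j]) (use diag_rot_mat_carrier[of a b "d # ds"] k in auto)
  then show ?thesis
    using k j by (simp add: sum_mult_diag_rot_mat_Cons del: sum.lessThan_Suc)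
qed

lemma char_poly_rot_mat: "char_poly (rot_mat a b) = [: a*a + b*b, -2*a, 1 :]"
proof -
  have "char_poly_matrix (rot_mat a b) \<in> carrier_mat 2 2"
    by (simp add: char_poly_matrix_def rot_mat_def)
  then show ?thesis
    unfolding char_poly_def by (subst det_2x2)
      (simp_all add: char_poly_matrix_def rot_mat_def numeral_2_eq_2)
qed

lemma char_poly_diag_rot_mat:
  "char_poly (diag_rot_mat a b ds) = (\<Prod>d\<leftarrow>ds. [: -d, 1 :]) * [: a*a + b*b, -2*a, 1 :]"
proof (induction ds)
  case Nil
  then show ?case by (simp add: char_poly_rot_mat)
next
  case (Cons d ds)
  have "char_poly (mat 1 1 (\<lambda>_. d)) = [: -d, 1 :]"
    by (subst char_poly_upper_triangular[of _ 1]) (auto simp: upper_triangular_def diag_mat_def)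
  moreover have "char_poly (diag_rot_mat a b (d # ds)) =
      char_poly (mat 1 1 (\<lambda>_. d)) * char_poly (diag_rot_mat a b ds)"
    unfolding diag_rot_mat.simps
    by (rule char_poly_four_block_zeros_col) (use diag_rot_mat_carrier[of a b ds] in auto)
  ultimately show ?case
    using Cons by (simp only: mult.assoc list.map prod_list.Cons)
qed

lemma diag_rot_mat_normal:
  "diag_rot_mat a b ds * (diag_rot_mat a b ds)\<^sup>T = (diag_rot_mat a b ds)\<^sup>T * diag_rot_mat a b ds"
proof (induction ds)
  case Nil
  show ?case by (rule eq_matI) (auto simp: rot_mat_def numeral_2_eq_2 less_Suc_eq scalar_prod_def)
next
  case (Cons d ds)
  let ?n = "length ds + 2" and ?D = "diag_rot_mat a b ds" and ?d = "mat 1 1 (\<lambda>_. d)"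
  have D: "?D \<in> carrier_mat ?n ?n" and DT: "?D\<^sup>T \<in> carrier_mat ?n ?n"
    using diag_rot_mat_carrier[of a b ds] by auto
  have d: "?d \<in> carrier_mat 1 1" and Z1: "0\<^sub>m 1 ?n \<in> carrier_mat 1 ?n"
    and Z2: "0\<^sub>m ?n 1 \<in> carrier_mat ?n 1"
    by auto
  have T: "(diag_rot_mat a b (d # ds))\<^sup>T = four_block_mat ?d (0\<^sub>m 1 ?n) (0\<^sub>m ?n 1) ?D\<^sup>T"
    unfolding diag_rot_mat.simps transpose_four_block_mat[OF d Z1 Z2 D] by auto
  show ?case
    unfolding T unfolding diag_rot_mat.simps(2) mult_four_block_mat[OF d Z1 Z2 D d Z1 Z2 DT]
      mult_four_block_mat[OF d Z1 Z2 DT d Z1 Z2 D]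
    using D DT Cons.IH by simp
qed

section \<open>Centrosymmetric realizations\<close>

(* The last conjunct asks the first column of P, an eigenvector of Q for hd ds, to be
   nonnegative and centrosymmetric. *)
definition centro_realization :: "real \<Rightarrow> real \<Rightarrow> real list \<Rightarrow> real mat \<Rightarrow> real mat \<Rightarrow> bool" where
  "centro_realization a b ds Q P \<longleftrightarrow>
     Q \<in> carrier_mat (length ds + 2) (length ds + 2) \<and>
     P \<in> carrier_mat (length ds + 2) (length ds + 2) \<and>
     P\<^sup>T * P = 1\<^sub>m (length ds + 2) \<and> Q * P = P * diag_rot_mat a b ds \<and>
     nonneg_mat Q \<and> centrosymmetric Q \<and>
     (\<forall>i < length ds + 2. P $$ (i,0) \<ge> 0 \<and> P $$ (length ds + 1 - i, 0) = P $$ (i,0))"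

lemma centro_realization_normal:
  assumes "centro_realization a b ds Q P"
  shows "normal_mat Q"
proof -
  let ?k = "length ds + 2" and ?D = "diag_rot_mat a b ds"
  have Q: "Q \<in> carrier_mat ?k ?k" and P: "P \<in> carrier_mat ?k ?k" and PP: "P\<^sup>T * P = 1\<^sub>m ?k"
    and QP: "Q * P = P * ?D"
    using assms unfolding centro_realization_def by auto
  have "Q = P * ?D * P\<^sup>T"
    by (rule intertwining_orthogonal_conj[OF P Q PP QP])
  then have "Q * Q\<^sup>T = Q\<^sup>T * Q"
    using orthogonal_conj_normal[OF P diag_rot_mat_carrier PP diag_rot_mat_normal] by simp
  then show ?thesis
    using normal_matI[OF Q] by blast
qed

lemma centro_realization_has_eigenvalues:
  assumes "centro_realization a b ds Q P"
  shows "has_eigenvalues Q (map complex_of_real ds @ [Complex a b, cnj (Complex a b)])"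
proof -
  interpret cp: map_poly_comm_ring_hom complex_of_real ..
  let ?k = "length ds + 2" and ?D = "diag_rot_mat a b ds"
  have Q: "Q \<in> carrier_mat ?k ?k" and P: "P \<in> carrier_mat ?k ?k" and PP: "P\<^sup>T * P = 1\<^sub>m ?k"
    and QP: "Q * P = P * ?D"
    using assms unfolding centro_realization_def by auto
  have PT: "P\<^sup>T \<in> carrier_mat ?k ?k" using P by simp
  have "similar_mat Q ?D"
    unfolding similar_mat_def similar_mat_wit_def
    by (rule exI[of _ P], rule exI[of _ "P\<^sup>T"])
      (use intertwining_orthogonal_conj[OF P Q PP QP] mat_mult_left_right_inverse[OF PT P PP]
         P Q PP diag_rot_mat_carrier[of a b ds] in auto)
  then have charQ: "char_poly Q = (\<Prod>d\<leftarrow>ds. [: -d, 1 :]) * [: a*a + b*b, -2*a, 1 :]"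
    by (simp add: char_poly_similar char_poly_diag_rot_mat)
  have rot: "map_poly complex_of_real [: a*a + b*b, -2*a, 1 :] =
      [: - Complex a b, 1:] * [: - cnj (Complex a b), 1 :]"
    by (simp add: complex_eq_iff hom_distribs)
  show ?thesis
    unfolding has_eigenvalues_def of_real_hom.char_poly_hom[OF Q] charQ cp.hom_mult rot cp.hom_prod_list
    by (simp add: o_def)
qed

section \<open>Bordering\<close>

definition border_mat :: "real mat \<Rightarrow> (nat \<Rightarrow> real) \<Rightarrow> real \<Rightarrow> real \<Rightarrow> real mat" where
  "border_mat Q u r g = mat (dim_row Q + 2) (dim_row Q + 2) (\<lambda>(i,j).
     if (i = 0 \<or> i = dim_row Q + 1) \<and> (j = 0 \<or> j = dim_row Q + 1) then (if i = j then 0 else g)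
     else if i = 0 \<or> i = dim_row Q + 1 then r * u (j - 1)
     else if j = 0 \<or> j = dim_row Q + 1 then r * u (i - 1)
     else Q $$ (i - 1, j - 1))"

(* The columns of border_basis P c s are c w + s u', h (e_0 - e_(k+1)), - s w + c u' and the
   remaining columns of P padded with zeros, where h = sqrt (1/2), w = h (e_0 + e_(k+1)) and u'
   is the first column of P padded with zeros. *)
definition border_basis :: "real mat \<Rightarrow> real \<Rightarrow> real \<Rightarrow> real mat" where
  "border_basis P c s = mat (dim_row P + 2) (dim_row P + 2) (\<lambda>(i,j).
     if i = 0 \<or> i = dim_row P + 1 then
       (if j = 0 then c * sqrt (1/2) else if j = 1 then (if i = 0 then sqrt (1/2) else - sqrt (1/2))
        else if j = 2 then - s * sqrt (1/2) else 0)
     else if j = 0 then s * P $$ (i - 1, 0) else if j = 1 then 0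
     else if j = 2 then c * P $$ (i - 1, 0) else P $$ (i - 1, j - 2))"

(* (c, s) and (-s, c) are eigenvectors of the symmetric matrix [[-la, sigma], [sigma, alpha]]
   for the eigenvalues alpha - la - lb and lb. *)
lemma border_rotation_exists:
  fixes \<alpha> la lb :: real
  assumes \<alpha>: "\<alpha> \<ge> 0" and la: "la < 0" and lb: "lb < 0"
  shows "\<exists>c s \<sigma>. c \<ge> 0 \<and> s \<ge> 0 \<and> \<sigma> \<ge> 0 \<and> c*c + s*s = 1 \<and>
     - la*c + \<sigma>*s = (\<alpha> - la - lb)*c \<and> \<sigma>*c + \<alpha>*s = (\<alpha> - la - lb)*s \<and>
     \<sigma>*c + la*s = - lb*s \<and> \<alpha>*c - \<sigma>*s = lb*c"
proof -
  define d where "d = \<alpha> - la - 2*lb"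
  have d: "d > 0" using \<alpha> la lb by (simp add: d_def)
  define c where "c = sqrt ((- la - lb) / d)"
  define s where "s = sqrt ((\<alpha> - lb) / d)"
  define \<sigma> where "\<sigma> = d * c * s"
  have c2: "d * (c*c) = - la - lb" unfolding c_def using d la lb by simp
  have s2: "d * (s*s) = \<alpha> - lb" unfolding s_def using d \<alpha> lb by simp
  have "d * (c*c + s*s) = d" using c2 s2 by (simp add: d_def algebra_simps)
  then have cs: "c*c + s*s = 1" using d by simp
  have "\<sigma>*s = c * (d * (s*s))" and "\<sigma>*c = s * (d * (c*c))"
    unfolding \<sigma>_def by (simp_all add: mult_ac)
  then have \<sigma>s: "\<sigma>*s = c * (\<alpha> - lb)" and \<sigma>c: "\<sigma>*c = s * (- la - lb)"
    using c2 s2 by simp_all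
  have "c \<ge> 0" "s \<ge> 0" "\<sigma> \<ge> 0"
    using d \<alpha> la lb unfolding \<sigma>_def c_def s_def by auto
  moreover have "- la*c + \<sigma>*s = (\<alpha> - la - lb)*c" and "\<alpha>*c - \<sigma>*s = lb*c"
    using \<sigma>s by (simp_all add: algebra_simps)
  moreover have "\<sigma>*c + \<alpha>*s = (\<alpha> - la - lb)*s" and "\<sigma>*c + la*s = - lb*s"
    using \<sigma>c by (simp_all add: algebra_simps)
  ultimately show ?thesis using cs by blast
qed

lemma border_basis_orthogonal:
  assumes P: "P \<in> carrier_mat k k" and PP: "P\<^sup>T * P = 1\<^sub>m k" and k: "0 < k" and cs: "c*c + s*s = 1"
  shows "(border_basis P c s)\<^sup>T * border_basis P c s = 1\<^sub>m (k+2)"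
proof -
  let ?B = "border_basis P c s"
  define kap where "kap j = (if j = 0 then s else if j = 1 then 0 else if j = 2 then c else (1::real))" for j :: nat
  define tau where "tau j = (if j < 3 then 0 else j - 2)" for j :: nat
  have B: "?B \<in> carrier_mat (k+2) (k+2)" using P by (simp add: border_basis_def)
  have mid: "?B $$ (Suc m, j) = kap j * P $$ (m, tau j)" if "m < k" "j < k+2" for m j
    using that P by (simp add: border_basis_def kap_def tau_def)
  have tau: "tau j < k" if "j < k+2" for j using that k unfolding tau_def by auto
  have hh: "sqrt (1/2) * (sqrt (1/2) * x) = x / 2" for x :: real
    by (simp add: mult.assoc[symmetric])
  show ?thesis
  proof (rule eq_matI)
    fix i j assume "i < dim_row (1\<^sub>m (k+2) :: real mat)" "j < dim_col (1\<^sub>m (k+2) :: real mat)"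
    then have i: "i < k+2" and j: "j < k+2" by auto
    have "(?B\<^sup>T * ?B) $$ (i,j) = (\<Sum>l<k+2. ?B $$ (l,i) * ?B $$ (l,j))"
      by (subst index_mult_mat_sum[of _ "k+2" "k+2" _ "k+2"]) (use B i j in auto)
    also have "\<dots> = ?B $$ (0,i) * ?B $$ (0,j) + ?B $$ (Suc k,i) * ?B $$ (Suc k,j) +
        kap i * kap j * (\<Sum>m<k. P $$ (m, tau i) * P $$ (m, tau j))"
      unfolding sum_lessThan_split_ends using i j by (simp add: mid sum_distrib_left mult_ac)
    also have "\<dots> = (if i = j then 1 else 0)"
    proof -
      have "i = 0 \<or> i = 1 \<or> i = 2 \<or> 3 \<le> i" "j = 0 \<or> j = 1 \<or> j = 2 \<or> 3 \<le> j" by auto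
      then show ?thesis
        using P i j cs orthonormal_cols[OF P PP tau[OF i] tau[OF j]]
        by (elim disjE) (auto simp: border_basis_def kap_def tau_def algebra_simps hh)
    qed
    finally show "(?B\<^sup>T * ?B) $$ (i,j) = 1\<^sub>m (k+2) $$ (i,j)" using i j by simp
  qed (use B in auto)
qed

lemma border_mat_mult_index:
  fixes Q P B :: "real mat" and r g \<kappa> :: real
  defines "M \<equiv> border_mat Q (\<lambda>m. P $$ (m,0)) r g"
  assumes Q: "Q \<in> carrier_mat k k" and P: "P \<in> carrier_mat k k" and PP: "P\<^sup>T * P = 1\<^sub>m k"
    and B: "B \<in> carrier_mat (k+2) n" and i: "i < k+2" and j: "j < n" and t: "t < k"
    and mid: "\<And>m. m < k \<Longrightarrow> B $$ (Suc m, j) = \<kappa> * P $$ (m,t)"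
  shows "(M * B) $$ (i,j) = M $$ (i,0) * B $$ (0,j) + M $$ (i, Suc k) * B $$ (Suc k, j) +
    \<kappa> * (if i = 0 \<or> i = Suc k then (if t = 0 then r else 0) else (Q * P) $$ (i - 1, t))"
proof -
  have M: "M \<in> carrier_mat (k+2) (k+2)" using Q by (simp add: M_def border_mat_def)
  have "(M * B) $$ (i,j) = (\<Sum>l<k+2. M $$ (i,l) * B $$ (l,j))"
    by (rule index_mult_mat_sum[OF M B i j])
  also have "\<dots> = M $$ (i,0) * B $$ (0,j) + M $$ (i, Suc k) * B $$ (Suc k, j) +
      \<kappa> * (\<Sum>m<k. M $$ (i, Suc m) * P $$ (m,t))"
    unfolding sum_lessThan_split_ends by (simp add: mid sum_distrib_left mult_ac)
  also have "(\<Sum>m<k. M $$ (i, Suc m) * P $$ (m,t)) =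
      (if i = 0 \<or> i = Suc k then (if t = 0 then r else 0) else (Q * P) $$ (i - 1, t))"
  proof (cases "i = 0 \<or> i = Suc k")
    case True
    have "(\<Sum>m<k. M $$ (i, Suc m) * P $$ (m,t)) = r * (\<Sum>m<k. P $$ (m,0) * P $$ (m,t))"
      unfolding sum_distrib_left by (rule sum.cong) (use Q True in \<open>auto simp: M_def border_mat_def\<close>)
    then show ?thesis
      using True orthonormal_cols[OF P PP _ t] t by simp
  next
    case False
    have "(\<Sum>m<k. M $$ (i, Suc m) * P $$ (m,t)) = (\<Sum>m<k. Q $$ (i - 1, m) * P $$ (m,t))"
      by (rule sum.cong) (use Q i False in \<open>auto simp: M_def border_mat_def\<close>)
    also have "\<dots> = (Q * P) $$ (i - 1, t)"
      by (rule index_mult_mat_sum[symmetric, OF Q P]) (use i False t in auto)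
    finally show ?thesis using False by simp
  qed
  finally show ?thesis .
qed

lemma border_basis_mult_diag_rot_mat:
  fixes P :: "real mat" and c s :: real
  defines "B \<equiv> border_basis P c s"
  assumes P: "P \<in> carrier_mat k k" and k: "k = length ds + 3" and i: "i < k+2" and j: "j < k+2"
  shows "(B * diag_rot_mat a b (x # y # z # ds)) $$ (i,j) =
    (if j < 3 then B $$ (i,j) * [x, y, z] ! j
     else if i = 0 \<or> i = Suc k then 0 else (P * diag_rot_mat a b (w # ds)) $$ (i - 1, j - 2))"
proof -
  have B: "B \<in> carrier_mat (k+2) (k+2)" using P by (simp add: B_def border_basis_def)
  have "length (x # y # z # ds) + 2 = k + 2" using k by simp
  then have D: "diag_rot_mat a b (x # y # z # ds) \<in> carrier_mat (k+2) (k+2)"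
    using diag_rot_mat_carrier[of a b "x # y # z # ds"] by metis
  have "(B * diag_rot_mat a b (x # y # z # ds)) $$ (i,j) =
      (\<Sum>l<k+2. B $$ (i,l) * diag_rot_mat a b (x # y # z # ds) $$ (l,j))"
    by (rule index_mult_mat_sum[OF B D i j])
  also have "\<dots> = (if j = 0 then B $$ (i,0) * x else if j = 1 then B $$ (i,1) * y
      else if j = 2 then B $$ (i,2) * z
      else (\<Sum>l<length ds + 2. B $$ (i, Suc (Suc (Suc l))) * diag_rot_mat a b ds $$ (l, j - 3)))"
    using k j by (simp add: sum_mult_diag_rot_mat_Cons numeral_3_eq_3 numeral_2_eq_2 del: sum.lessThan_Suc)
  also have "\<dots> = (if j < 3 then B $$ (i,j) * [x, y, z] ! j
     else if i = 0 \<or> i = Suc k then 0 else (P * diag_rot_mat a b (w # ds)) $$ (i - 1, j - 2))"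
  proof (cases "j < 3")
    case True
    then have "j = 0 \<or> j = 1 \<or> j = 2" by auto
    then show ?thesis by auto
  next
    case False
    have "(\<Sum>l<length ds + 2. B $$ (i, Suc (Suc (Suc l))) * diag_rot_mat a b ds $$ (l, j - 3)) =
        (if i = 0 \<or> i = Suc k then 0
         else (\<Sum>l<length ds + 2. P $$ (i - 1, Suc l) * diag_rot_mat a b ds $$ (l, j - 3)))"
      using P i k by (auto simp: B_def border_basis_def intro!: sum.neutral sum.cong)
    moreover have "(P * diag_rot_mat a b (w # ds)) $$ (i - 1, j - 2) =
        (\<Sum>l<length ds + 2. P $$ (i - 1, Suc l) * diag_rot_mat a b ds $$ (l, j - 3))"
      if "i \<noteq> 0" "i \<noteq> Suc k"
      using index_mult_diag_rot_mat_Cons[OF P k, of "i - 1" "j - 2"] i j that False by simp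
    ultimately show ?thesis using False by auto
  qed
  finally show ?thesis .
qed

lemma border_mat_intertwines:
  fixes Q P :: "real mat" and c s \<sigma> \<alpha> \<alpha>' la lb :: real
  assumes Q: "Q \<in> carrier_mat k k" and P: "P \<in> carrier_mat k k" and PP: "P\<^sup>T * P = 1\<^sub>m k"
    and QP: "Q * P = P * diag_rot_mat a b (\<alpha> # ds)" and k: "k = length ds + 3"
    and e1: "- la*c + \<sigma>*s = \<alpha>'*c" and e2: "\<sigma>*c + \<alpha>*s = \<alpha>'*s"
    and e3: "\<sigma>*c + la*s = - lb*s" and e4: "\<alpha>*c - \<sigma>*s = lb*c"
  shows "border_mat Q (\<lambda>m. P $$ (m,0)) (\<sigma> * sqrt (1/2)) (- la) * border_basis P c s =
    border_basis P c s * diag_rot_mat a b (\<alpha>' # la # lb # ds)"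
    (is "?M * ?B = ?B * ?D'")
proof -
  have B: "?B \<in> carrier_mat (k+2) (k+2)" using P by (simp add: border_basis_def)
  have "length (\<alpha>' # la # lb # ds) + 2 = k + 2" using k by simp
  then have D': "?D' \<in> carrier_mat (k+2) (k+2)"
    using diag_rot_mat_carrier[of a b "\<alpha>' # la # lb # ds"] by metis
  have eigen: "(Q * P) $$ (m, 0) = \<alpha> * P $$ (m, 0)" if "m < k" for m
    using index_mult_diag_rot_mat_Cons[OF P k that, of 0] QP k by simp
  have hh: "sqrt (1/2) * (sqrt (1/2) * x) = x / 2" for x :: real by (simp add: mult.assoc[symmetric])
  have end0: "s * (\<sigma> * sqrt (1/2)) - la * (c * sqrt (1/2)) = c * sqrt (1/2) * \<alpha>'"
    using arg_cong[OF e1, of "\<lambda>y. sqrt (1/2) * y"] by (simp add: algebra_simps)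
  have end2: "la * (s * sqrt (1/2)) + c * (\<sigma> * sqrt (1/2)) = - (s * sqrt (1/2) * lb)"
    using arg_cong[OF e3, of "\<lambda>y. sqrt (1/2) * y"] by (simp add: algebra_simps)
  have mid0: "2 * (\<sigma> * (c * (sqrt (1/2) * (sqrt (1/2) * x)))) + s * (\<alpha> * x) = s * x * \<alpha>'" for x
    using arg_cong[OF e2, of "\<lambda>y. x * y"] by (simp add: hh algebra_simps)
  have mid2: "c * (\<alpha> * x) - 2 * (\<sigma> * (s * (sqrt (1/2) * (sqrt (1/2) * x)))) = c * x * lb" for x
    using arg_cong[OF e4, of "\<lambda>y. x * y"] by (simp add: hh algebra_simps)
  show ?thesis
  proof (rule eq_matI)
    fix i j assume "i < dim_row (?B * ?D')" "j < dim_col (?B * ?D')"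
    then have i: "i < k+2" and j: "j < k+2" using B D' by auto
    define \<kappa> where "\<kappa> = (if j = 0 then s else if j = 1 then 0 else if j = 2 then c else 1)"
    define t where "t = (if j < 3 then 0 else j - 2)"
    have L: "(?M * ?B) $$ (i,j) = ?M $$ (i,0) * ?B $$ (0,j) + ?M $$ (i, Suc k) * ?B $$ (Suc k, j) +
        \<kappa> * (if i = 0 \<or> i = Suc k then (if t = 0 then \<sigma> * sqrt (1/2) else 0) else (Q * P) $$ (i - 1, t))"
      by (rule border_mat_mult_index[OF Q P PP B i j])
        (use P k j in \<open>auto simp: t_def \<kappa>_def border_basis_def\<close>)
    have R: "(?B * ?D') $$ (i,j) = (if j < 3 then ?B $$ (i,j) * [\<alpha>', la, lb] ! j
        else if i = 0 \<or> i = Suc k then 0 else (P * diag_rot_mat a b (\<alpha> # ds)) $$ (i - 1, j - 2))"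
      by (rule border_basis_mult_diag_rot_mat[OF P k i j])
    have "j = 0 \<or> j = 1 \<or> j = 2 \<or> 3 \<le> j" by auto
    then show "(?M * ?B) $$ (i,j) = (?B * ?D') $$ (i,j)"
      unfolding L R using P Q QP i j eigen[of "i - 1"] end0 end2 mid0 mid2
      by (elim disjE) (auto simp: border_basis_def border_mat_def \<kappa>_def t_def)
  qed (use B D' Q in \<open>auto simp: border_mat_def\<close>)
qed

lemma border_mat_nonneg:
  assumes "Q \<in> carrier_mat k k" and "nonneg_mat Q" and "\<And>m. m < k \<Longrightarrow> u m \<ge> 0"
    and "r \<ge> 0" and "g \<ge> 0"
  shows "nonneg_mat (border_mat Q u r g)"
  using assms by (auto simp: nonneg_mat_def border_mat_def)

lemma border_mat_centrosymmetric:
  assumes Q: "Q \<in> carrier_mat k k" and "centrosymmetric Q" and u: "\<And>m. m < k \<Longrightarrow> u (k - 1 - m) = u m"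
  shows "centrosymmetric (border_mat Q u r g)"
proof -
  have M: "border_mat Q u r g \<in> carrier_mat (k+2) (k+2)" using Q by (simp add: border_mat_def)
  have cs: "\<forall>i<k. \<forall>j<k. Q $$ (k-1-i, k-1-j) = Q $$ (i,j)"
    using assms centrosymmetric_iff[OF Q] by blast
  have idx: "k + 2 - 1 - Suc m = Suc (k - 1 - m)" "k - Suc m \<noteq> k" if "m < k" for m
    using that by auto
  have "border_mat Q u r g $$ (k+2-1-i, k+2-1-j) = border_mat Q u r g $$ (i,j)" if "i < k+2" "j < k+2" for i j
  proof -
    have "i = 0 \<or> i = Suc k \<or> (\<exists>m. i = Suc m \<and> m < k)" "j = 0 \<or> j = Suc k \<or> (\<exists>m. j = Suc m \<and> m < k)"
      using that by presburger+
    then show ?thesis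
      using Q cs idx u by (elim disjE exE conjE) (simp_all add: border_mat_def)
  qed
  then show ?thesis
    using centrosymmetric_iff[OF M] by simp
qed

lemma border_basis_first_col:
  assumes P: "P \<in> carrier_mat k k" and "c \<ge> 0" and "s \<ge> 0"
    and u: "\<And>m. m < k \<Longrightarrow> P $$ (m,0) \<ge> 0 \<and> P $$ (k - 1 - m, 0) = P $$ (m,0)"
    and i: "i < k+2"
  shows "border_basis P c s $$ (i,0) \<ge> 0 \<and> border_basis P c s $$ (k+1-i, 0) = border_basis P c s $$ (i,0)"
proof -
  have "i = 0 \<or> i = Suc k \<or> (\<exists>m. i = Suc m \<and> m < k)" using i by presburger
  moreover have "k + 1 - Suc m = Suc (k - 1 - m)" if "m < k" for m using that by auto
  ultimately show ?thesis
    using P u assms(2,3) by (elim disjE exE conjE) (auto simp: border_basis_def)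
qed

lemma centro_realization_border:
  assumes R: "centro_realization a b (\<alpha> # ds) Q P" and \<alpha>: "\<alpha> \<ge> 0" and la: "la < 0" and lb: "lb < 0"
  shows "\<exists>Q' P'. centro_realization a b ((\<alpha> - la - lb) # la # lb # ds) Q' P'"
proof -
  define k where "k = length ds + 3"
  obtain c s \<sigma> where c: "c \<ge> 0" and s: "s \<ge> 0" and \<sigma>: "\<sigma> \<ge> 0" and cs: "c*c + s*s = 1"
    and e: "- la*c + \<sigma>*s = (\<alpha> - la - lb)*c" "\<sigma>*c + \<alpha>*s = (\<alpha> - la - lb)*s"
      "\<sigma>*c + la*s = - lb*s" "\<alpha>*c - \<sigma>*s = lb*c"
    using border_rotation_exists[OF \<alpha> la lb] by blast
  have Q: "Q \<in> carrier_mat k k" and P: "P \<in> carrier_mat k k" and PP: "P\<^sup>T * P = 1\<^sub>m k"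
    and QP: "Q * P = P * diag_rot_mat a b (\<alpha> # ds)" and nn: "nonneg_mat Q" and cQ: "centrosymmetric Q"
    and u: "\<And>m. m < k \<Longrightarrow> P $$ (m,0) \<ge> 0 \<and> P $$ (k - 1 - m, 0) = P $$ (m,0)"
    using R unfolding centro_realization_def k_def by auto
  let ?Q' = "border_mat Q (\<lambda>m. P $$ (m,0)) (\<sigma> * sqrt (1/2)) (- la)"
  let ?P' = "border_basis P c s"
  have len: "length ((\<alpha> - la - lb) # la # lb # ds) = k" by (simp add: k_def)
  have "centro_realization a b ((\<alpha> - la - lb) # la # lb # ds) ?Q' ?P'"
    unfolding centro_realization_def len
  proof (intro conjI allI impI)
    show "?Q' \<in> carrier_mat (k+2) (k+2)" using Q by (simp add: border_mat_def)
    show "?P' \<in> carrier_mat (k+2) (k+2)" using P by (simp add: border_basis_def)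
    show "?P'\<^sup>T * ?P' = 1\<^sub>m (k+2)" by (rule border_basis_orthogonal[OF P PP _ cs]) (simp add: k_def)
    show "?Q' * ?P' = ?P' * diag_rot_mat a b ((\<alpha> - la - lb) # la # lb # ds)"
      by (rule border_mat_intertwines[OF Q P PP QP k_def e])
    show "nonneg_mat ?Q'" by (rule border_mat_nonneg[OF Q nn]) (use u \<sigma> la in auto)
    show "centrosymmetric ?Q'" by (rule border_mat_centrosymmetric[OF Q cQ]) (use u in auto)
  qed (use border_basis_first_col[OF P c s u] in auto)
  then show ?thesis by blast
qed

section \<open>Realizations of size 4 and 5\<close>

lemma sum_lessThan_4: "(\<Sum>l<(4::nat). f l) = f 0 + f 1 + f 2 + (f 3 :: real)"
  by (simp add: numeral_eq_Suc)

lemma less_4_cases: "(i::nat) < 4 \<longleftrightarrow> i = 0 \<or> i = 1 \<or> i = 2 \<or> i = 3" by auto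

(* base4_mat alpha mu a b = hadamard4 * diag_rot_mat a b [alpha, mu] * hadamard4^T. The first two
   columns of hadamard4 are centrosymmetric and the last two skew-centrosymmetric, which is what
   makes the product centrosymmetric. *)
definition hadamard4 :: "real mat" where
  "hadamard4 = mat 4 4 (\<lambda>(i,j).
     [[1, 1, 1, 1], [1, -1, 1, -1], [1, -1, -1, 1], [1, 1, -1, -1]] ! i ! j / 2)"

definition base4_mat :: "real \<Rightarrow> real \<Rightarrow> real \<Rightarrow> real \<Rightarrow> real mat" where
  "base4_mat \<alpha> \<mu> a b = mat 4 4 (\<lambda>(i,j). let p = (\<alpha> + \<mu>) / 4; q = (\<alpha> - \<mu>) / 4 in
     [[p + a/2, q - b/2, q + b/2, p - a/2], [q + b/2, p + a/2, p - a/2, q - b/2],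
      [q - b/2, p - a/2, p + a/2, q + b/2], [p - a/2, q + b/2, q - b/2, p + a/2]] ! i ! j)"

lemma hadamard4_carrier: "hadamard4 \<in> carrier_mat 4 4"
  by (simp add: hadamard4_def)

lemma base4_mat_carrier: "base4_mat \<alpha> \<mu> a b \<in> carrier_mat 4 4"
  by (simp add: base4_mat_def)

lemma hadamard4_orthogonal: "hadamard4\<^sup>T * hadamard4 = 1\<^sub>m 4"
proof (rule eq_matI)
  fix i j assume "i < dim_row (1\<^sub>m 4 :: real mat)" "j < dim_col (1\<^sub>m 4 :: real mat)"
  then have "i < 4" "j < 4" by auto
  then show "(hadamard4\<^sup>T * hadamard4) $$ (i,j) = 1\<^sub>m 4 $$ (i,j)"
    by (subst index_mult_mat_sum[of _ 4 4 _ 4])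
      (use hadamard4_carrier in \<open>auto simp: sum_lessThan_4 less_4_cases hadamard4_def\<close>)
qed (use hadamard4_carrier in auto)

lemma base4_mat_intertwines: "base4_mat \<alpha> \<mu> a b * hadamard4 = hadamard4 * diag_rot_mat a b [\<alpha>, \<mu>]"
proof -
  have D: "diag_rot_mat a b [\<alpha>, \<mu>] \<in> carrier_mat 4 4"
    using diag_rot_mat_carrier[of a b "[\<alpha>, \<mu>]"] by (simp add: numeral_eq_Suc)
  show ?thesis
  proof (rule eq_matI)
    fix i j
    assume "i < dim_row (hadamard4 * diag_rot_mat a b [\<alpha>, \<mu>])"
      and "j < dim_col (hadamard4 * diag_rot_mat a b [\<alpha>, \<mu>])"
    then have i: "i < 4" and j: "j < 4" using D by (auto simp: hadamard4_def)
    show "(base4_mat \<alpha> \<mu> a b * hadamard4) $$ (i,j) =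
        (hadamard4 * diag_rot_mat a b [\<alpha>, \<mu>]) $$ (i,j)"
      unfolding index_mult_mat_sum[OF base4_mat_carrier hadamard4_carrier i j]
        index_mult_mat_sum[OF hadamard4_carrier D i j]
      using i j by (auto simp: sum_lessThan_4 less_4_cases hadamard4_def base4_mat_def
          diag_rot_mat_Cons_index rot_mat_def field_simps)
  qed (use D in \<open>auto simp: hadamard4_def base4_mat_def\<close>)
qed

lemma centro_realization_4:
  assumes "\<alpha> + \<mu> \<ge> 2 * \<bar>a\<bar>" and "\<alpha> - \<mu> \<ge> 2 * \<bar>b\<bar>"
  shows "centro_realization a b [\<alpha>, \<mu>] (base4_mat \<alpha> \<mu> a b) hadamard4"
proof -
  have "\<bar>2 * a\<bar> \<le> \<alpha> + \<mu>" "\<bar>2 * b\<bar> \<le> \<alpha> - \<mu>" using assms by auto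
  then have nn: "nonneg_mat (base4_mat \<alpha> \<mu> a b)"
    unfolding nonneg_mat_def by (auto simp: less_4_cases base4_mat_def Let_def abs_le_iff field_simps)
  have cs: "centrosymmetric (base4_mat \<alpha> \<mu> a b)"
    unfolding centrosymmetric_iff[OF base4_mat_carrier] by (auto simp: less_4_cases base4_mat_def Let_def)
  have len: "length [\<alpha>, \<mu>] = 2" by simp
  show ?thesis
    unfolding centro_realization_def len
    using base4_mat_carrier hadamard4_carrier hadamard4_orthogonal base4_mat_intertwines nn cs
    by (auto simp: less_4_cases hadamard4_def)
qed

lemma sum_lessThan_5: "(\<Sum>l<(5::nat). f l) = f 0 + f 1 + f 2 + f 3 + (f 4 :: real)"
  by (simp add: numeral_eq_Suc)

lemma less_5_cases: "(i::nat) < 5 \<longleftrightarrow> i = 0 \<or> i = 1 \<or> i = 2 \<or> i = 3 \<or> i = 4" by auto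

definition drop_mid :: "nat \<Rightarrow> nat" where
  "drop_mid i = (if i < 2 then i else i - 1)"

(* base5_mat (alpha + l) mu a b rho borders base4_mat (alpha + l) mu a b with a middle row and
   column along its Perron vector; with rho from split_rotation_exists this splits the
   eigenvalue alpha + l into alpha and l. *)
definition base5_basis :: "real \<Rightarrow> real \<Rightarrow> real mat" where
  "base5_basis c s = mat 5 5 (\<lambda>(i,j). if i = 2 then [s, c, 0, 0, 0] ! j
     else if j = 0 then c/2 else if j = 1 then - s/2 else hadamard4 $$ (drop_mid i, j - 1))"

definition base5_mat :: "real \<Rightarrow> real \<Rightarrow> real \<Rightarrow> real \<Rightarrow> real \<Rightarrow> real mat" where
  "base5_mat \<alpha> \<mu> a b \<rho> = mat 5 5 (\<lambda>(i,j). if i = 2 \<or> j = 2 then (if i = j then 0 else \<rho>/2)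
     else base4_mat \<alpha> \<mu> a b $$ (drop_mid i, drop_mid j))"

lemma split_rotation_exists:
  fixes \<alpha> l :: real
  assumes \<alpha>: "\<alpha> \<ge> 0" and l: "l < 0"
  shows "\<exists>c s \<rho>. c \<ge> 0 \<and> s \<ge> 0 \<and> \<rho> \<ge> 0 \<and> c*c + s*s = 1 \<and> \<rho>*c = \<alpha>*s \<and> \<rho>*s = - l*c"
proof -
  define d where "d = \<alpha> - l"
  have d: "d > 0" using \<alpha> l by (simp add: d_def)
  define c where "c = sqrt (\<alpha> / d)"
  define s where "s = sqrt (- l / d)"
  define \<rho> where "\<rho> = d * c * s"
  have c2: "d * (c*c) = \<alpha>" unfolding c_def using d \<alpha> by simp
  have s2: "d * (s*s) = - l" unfolding s_def using d l by simp
  have "d * (c*c + s*s) = d" using c2 s2 by (simp add: d_def algebra_simps)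
  then have "c*c + s*s = 1" using d by simp
  moreover have "\<rho>*c = s * (d * (c*c))" and "\<rho>*s = c * (d * (s*s))"
    unfolding \<rho>_def by (simp_all add: mult_ac)
  moreover have "\<alpha> / d \<ge> 0" "- l / d \<ge> 0" using d \<alpha> l by (simp_all add: divide_nonpos_pos)
  then have "c \<ge> 0" "s \<ge> 0" unfolding c_def s_def by auto
  moreover have "\<rho> \<ge> 0" unfolding \<rho>_def using d \<open>c \<ge> 0\<close> \<open>s \<ge> 0\<close> by simp
  ultimately show ?thesis
    using c2 s2 by (metis mult.commute)
qed

lemma base5_basis_carrier: "base5_basis c s \<in> carrier_mat 5 5"
  by (simp add: base5_basis_def)

lemma base5_mat_carrier: "base5_mat \<alpha> \<mu> a b \<rho> \<in> carrier_mat 5 5"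
  by (simp add: base5_mat_def)

lemma base5_basis_orthogonal:
  assumes "c*c + s*s = 1"
  shows "(base5_basis c s)\<^sup>T * base5_basis c s = 1\<^sub>m 5"
proof (rule eq_matI)
  fix i j assume "i < dim_row (1\<^sub>m 5 :: real mat)" "j < dim_col (1\<^sub>m 5 :: real mat)"
  then have "i < 5" "j < 5" by auto
  then show "((base5_basis c s)\<^sup>T * base5_basis c s) $$ (i,j) = 1\<^sub>m 5 $$ (i,j)"
    using assms by (subst index_mult_mat_sum[of _ 5 5 _ 5]) (use base5_basis_carrier in
      \<open>auto simp: sum_lessThan_5 less_5_cases base5_basis_def hadamard4_def drop_mid_def algebra_simps\<close>)
qed (use base5_basis_carrier in auto)

lemma base5_mat_intertwines:
  assumes "\<rho>*c = \<alpha>*s" and "\<rho>*s = - l*c"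
  shows "base5_mat (\<alpha> + l) \<mu> a b \<rho> * base5_basis c s = base5_basis c s * diag_rot_mat a b [\<alpha>, l, \<mu>]"
    (is "?Q * ?P = ?P * ?D")
proof -
  have D: "?D \<in> carrier_mat 5 5"
    using diag_rot_mat_carrier[of a b "[\<alpha>, l, \<mu>]"] by (simp add: numeral_eq_Suc)
  show ?thesis
  proof (rule eq_matI)
    fix i j assume "i < dim_row (?P * ?D)" "j < dim_col (?P * ?D)"
    then have i: "i < 5" and j: "j < 5" using D by (auto simp: base5_basis_def)
    show "(?Q * ?P) $$ (i,j) = (?P * ?D) $$ (i,j)"
      unfolding index_mult_mat_sum[OF base5_mat_carrier base5_basis_carrier i j]
        index_mult_mat_sum[OF base5_basis_carrier D i j]
      using i j assms by (auto simp: sum_lessThan_5 less_5_cases base5_basis_def base5_mat_def hadamard4_def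
          base4_mat_def drop_mid_def diag_rot_mat_Cons_index rot_mat_def field_simps)
  qed (use D in \<open>auto simp: base5_basis_def base5_mat_def\<close>)
qed

lemma centro_realization_5:
  assumes \<alpha>: "\<alpha> \<ge> 0" and l: "l < 0"
    and "\<alpha> + l + \<mu> \<ge> 2 * \<bar>a\<bar>" and "\<alpha> + l - \<mu> \<ge> 2 * \<bar>b\<bar>"
  shows "\<exists>Q P. centro_realization a b [\<alpha>, l, \<mu>] Q P"
proof -
  obtain c s \<rho> where c: "c \<ge> 0" and s: "s \<ge> 0" and \<rho>: "\<rho> \<ge> 0" and cs: "c*c + s*s = 1"
    and e: "\<rho>*c = \<alpha>*s" "\<rho>*s = - l*c"
    using split_rotation_exists[OF \<alpha> l] by blast
  let ?Q = "base5_mat (\<alpha> + l) \<mu> a b \<rho>"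
  have "\<bar>2 * a\<bar> \<le> \<alpha> + l + \<mu>" "\<bar>2 * b\<bar> \<le> \<alpha> + l - \<mu>" using assms by auto
  then have nn: "nonneg_mat ?Q"
    using \<rho> unfolding nonneg_mat_def
    by (auto simp: less_5_cases base5_mat_def base4_mat_def drop_mid_def Let_def abs_le_iff field_simps)
  have cQ: "centrosymmetric ?Q"
    unfolding centrosymmetric_iff[OF base5_mat_carrier]
    by (auto simp: less_5_cases base5_mat_def base4_mat_def drop_mid_def Let_def)
  have len: "length [\<alpha>, l, \<mu>] = 3" by simp
  have "centro_realization a b [\<alpha>, l, \<mu>] ?Q (base5_basis c s)"
    unfolding centro_realization_def len
    using base5_mat_carrier base5_basis_carrier base5_basis_orthogonal[OF cs] base5_mat_intertwines[OF e]
      nn cQ c s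
    by (auto simp: less_5_cases base5_basis_def hadamard4_def drop_mid_def)
  then show ?thesis by blast
qed

section \<open>Adding the negative eigenvalues in pairs\<close>

lemma centro_realization_extend:
  fixes lam :: "nat \<Rightarrow> real"
  assumes "\<exists>Q P. centro_realization a b ((lam 0 + (\<Sum>j=1..2*r. lam j)) # rest) Q P"
    and "lam 0 + (\<Sum>j=1..2*r. lam j) \<ge> 0"
    and "\<And>j. 1 \<le> j \<Longrightarrow> j \<le> 2*r \<Longrightarrow> lam j < 0"
  shows "\<exists>Q P. centro_realization a b (map lam [0..<2*r+1] @ rest) Q P"
  using assms
proof (induction r arbitrary: rest)
  case 0
  then show ?case by simp
next
  case (Suc r)
  let ?\<alpha> = "lam 0 + (\<Sum>j=1..2*r. lam j)"
  have split: "lam 0 + (\<Sum>j=1..2 * Suc r. lam j) = ?\<alpha> + lam (2*r+1) + lam (2*r+2)"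
    by (simp add: add.assoc)
  have l1: "lam (2*r+1) < 0" and l2: "lam (2*r+2) < 0" using Suc.prems(3) by auto
  obtain Q P where "centro_realization a b ((?\<alpha> + lam (2*r+1) + lam (2*r+2)) # rest) Q P"
    using Suc.prems(1) unfolding split by blast
  from centro_realization_border[OF this _ l1 l2]
  have "\<exists>Q P. centro_realization a b (?\<alpha> # lam (2*r+1) # lam (2*r+2) # rest) Q P"
    using Suc.prems(2) unfolding split by simp
  moreover have "?\<alpha> \<ge> 0" using Suc.prems(2) l1 l2 unfolding split by linarith
  ultimately have "\<exists>Q P. centro_realization a b (map lam [0..<2*r+1] @ lam (2*r+1) # lam (2*r+2) # rest) Q P"
    using Suc.IH Suc.prems(3) by simp
  moreover have "map lam [0..<2 * Suc r + 1] = map lam [0..<2*r+1] @ [lam (2*r+1), lam (2*r+2)]"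
    by simp
  ultimately show ?case by simp
qed

lemma centro_realization_exists_odd:
  fixes lam :: "nat \<Rightarrow> real"
  assumes neg: "\<And>j. 1 \<le> j \<Longrightarrow> j \<le> 2*r+1 \<Longrightarrow> lam j < 0"
    and ab: "2 * \<bar>a\<bar> \<le> lam 0 + (\<Sum>j=1..2*r+1. lam j)" "2 * \<bar>b\<bar> \<le> lam 0 + (\<Sum>j=1..2*r+1. lam j)"
  shows "\<exists>Q P. centro_realization a b (map lam [0..<2*r+2]) Q P"
proof -
  let ?\<alpha> = "lam 0 + (\<Sum>j=1..2*r. lam j)" and ?\<mu> = "lam (2*r+1)"
  have sum_n: "lam 0 + (\<Sum>j=1..2*r+1. lam j) = ?\<alpha> + ?\<mu>" by simp
  have \<mu>: "?\<mu> < 0" using neg by simp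
  have "centro_realization a b [?\<alpha>, ?\<mu>] (base4_mat ?\<alpha> ?\<mu> a b) hadamard4"
    using ab \<mu> unfolding sum_n by (intro centro_realization_4) auto
  moreover have "?\<alpha> \<ge> 0" using ab(1) \<mu> abs_ge_zero[of a] unfolding sum_n by linarith
  ultimately have "\<exists>Q P. centro_realization a b (map lam [0..<2*r+1] @ [?\<mu>]) Q P"
    using neg by (intro centro_realization_extend) auto
  then show ?thesis by simp
qed

lemma centro_realization_exists_even:
  fixes lam :: "nat \<Rightarrow> real"
  assumes neg: "\<And>j. 1 \<le> j \<Longrightarrow> j \<le> 2*r+2 \<Longrightarrow> lam j < 0"
    and ab: "2 * \<bar>a\<bar> \<le> lam 0 + (\<Sum>j=1..2*r+2. lam j)" "2 * \<bar>b\<bar> \<le> lam 0 + (\<Sum>j=1..2*r+2. lam j)"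
  shows "\<exists>Q P. centro_realization a b (map lam [0..<2*r+3]) Q P"
proof -
  let ?\<alpha> = "lam 0 + (\<Sum>j=1..2*r. lam j)" and ?l = "lam (2*r+1)" and ?\<mu> = "lam (2*r+2)"
  have sum_n: "lam 0 + (\<Sum>j=1..2*r+2. lam j) = ?\<alpha> + ?l + ?\<mu>" by (simp add: add.assoc)
  have l: "?l < 0" "?\<mu> < 0" using neg by auto
  have "?\<alpha> \<ge> 0" using ab(1) l abs_ge_zero[of a] unfolding sum_n by linarith
  moreover from this have "\<exists>Q P. centro_realization a b [?\<alpha>, ?l, ?\<mu>] Q P"
    using ab l unfolding sum_n by (intro centro_realization_5) auto
  ultimately have "\<exists>Q P. centro_realization a b (map lam [0..<2*r+1] @ [?l, ?\<mu>]) Q P"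
    using neg by (intro centro_realization_extend) auto
  moreover have "map lam [0..<2*r+3] = map lam [0..<2*r+1] @ [?l, ?\<mu>]" by (simp add: numeral_3_eq_3)
  ultimately show ?thesis by simp
qed

lemma centro_realization_exists:
  fixes lam :: "nat \<Rightarrow> real"
  assumes n: "n \<ge> 1" and l1: "0 > lam 1" and dec: "\<And>j. 1 \<le> j \<Longrightarrow> j < n \<Longrightarrow> lam j \<ge> lam (Suc j)"
    and tot: "lam 0 + (\<Sum>j=1..n. lam j) \<ge> 2 * cmod (Complex a b)"
  shows "\<exists>Q P. centro_realization a b (map lam [0..<n+1]) Q P"
proof -
  have neg: "1 \<le> j \<Longrightarrow> j \<le> n \<Longrightarrow> lam j < 0" for j
  proof (induction j)
    case (Suc j)
    then show ?case using l1 dec[of j] by (cases "j = 0") auto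
  qed simp
  have ab: "2 * \<bar>a\<bar> \<le> lam 0 + (\<Sum>j=1..n. lam j)" "2 * \<bar>b\<bar> \<le> lam 0 + (\<Sum>j=1..n. lam j)"
    using tot abs_Re_le_cmod[of "Complex a b"] abs_Im_le_cmod[of "Complex a b"] by auto
  show ?thesis
  proof (cases "odd n")
    case True
    then obtain r where "n = 2*r + 1" by (metis oddE)
    then show ?thesis using centro_realization_exists_odd[of r lam a b] neg ab by simp
  next
    case False
    have "n = 2 * (n div 2 - 1) + 2" using False n by presburger
    then obtain r where "n = 2*r + 2" by blast
    then show ?thesis using centro_realization_exists_even[of r lam a b] neg ab by (simp add: numeral_3_eq_3)
  qed
qed

theorem theorem3p7:
  fixes n :: nat and lam :: "nat \<Rightarrow> real" and a b :: real
  assumes "n \<ge> 1"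
    and "lam 0 \<ge> 0" and "0 > lam 1"
    and "\<And>j. 1 \<le> j \<Longrightarrow> j < n \<Longrightarrow> lam j \<ge> lam (Suc j)"
    and "b > 0"
    and "lam 0 + (\<Sum>j=1..n. lam j) - 2 * cmod (Complex a b) \<ge> 0"
  shows "\<exists>Q :: real mat. Q \<in> carrier_mat (n+3) (n+3) \<and> normal_mat Q \<and>
           centrosymmetric Q \<and> nonneg_mat Q \<and>
           has_eigenvalues Q (map (\<lambda>j. complex_of_real (lam j)) [0..<n+1]
                               @ [Complex a b, cnj (Complex a b)])"
proof -
  obtain Q P where R: "centro_realization a b (map lam [0..<n+1]) Q P"
    using centro_realization_exists[OF assms(1,3,4)] assms(6) by fastforce
  show ?thesis
    using centro_realization_normal[OF R] centro_realization_has_eigenvalues[OF R] R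
    by (intro exI[of _ Q]) (auto simp: centro_realization_def o_def)
qed

end
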